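(* Let $3\le k\le n-1$ and let $T$ be a tree attaining the maximum value of $M_2$ over $\mathcal{CT}_{n,k}$. If $T$ contains a pendent vertex adjacent to a vertex of degree $4$, then $T$ contains no vertex of degree $3$ adjacent to a vertex of degree $2$.
   Context: A chemical tree is a tree with maximum degree at most $4$. A pendent vertex has degree $1$. A segment of a tree is a path of positive length neither of whose end vertices has degree $2$ and all of whose internal vertices have degree $2$. $\mathcal{CT}_{n,k}$ is the class of all $n$-vertex chemical trees with exactly $k$ segments. $M_2(G)=\sum_{uv\in E(G)}d_ud_v$, where $d_v$ is the degree of $v$. *)

theory Defs
  imports Main
begin

definition adj :: "'a set set \<Rightarrow> 'a \<Rightarrow> 'a \<Rightarrow> bool" where
  "adj E u v \<longleftrightarrow> u \<noteq> v \<and> {u, v} \<in> E"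

definition deg :: "'a set set \<Rightarrow> 'a \<Rightarrow> nat" where
  "deg E v = card {e \<in> E. v \<in> e}"

definition is_tree :: "'a set \<Rightarrow> 'a set set \<Rightarrow> bool" where
  "is_tree V E \<longleftrightarrow> finite V \<and> V \<noteq> {} \<and>
     E \<subseteq> {{u, v} | u v. u \<in> V \<and> v \<in> V \<and> u \<noteq> v} \<and>
     (\<forall>u\<in>V. \<forall>v\<in>V. (u, v) \<in> {(x, y). adj E x y}\<^sup>*) \<and>
     card E = card V - 1"

definition chemical :: "'a set \<Rightarrow> 'a set set \<Rightarrow> bool" where
  "chemical V E \<longleftrightarrow> (\<forall>v\<in>V. deg E v \<le> 4)"

definition is_segment :: "'a set set \<Rightarrow> 'a list \<Rightarrow> bool" where
  "is_segment E p \<longleftrightarrow> length p \<ge> 2 \<and> distinct p \<and>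
     (\<forall>i < length p - 1. adj E (p ! i) (p ! Suc i)) \<and>
     deg E (hd p) \<noteq> 2 \<and> deg E (last p) \<noteq> 2 \<and>
     (\<forall>i. 0 < i \<and> i < length p - 1 \<longrightarrow> deg E (p ! i) = 2)"

text \<open>Segments are counted as unordered objects (a path and its reversal are the same
  segment); in a tree a path is determined by its vertex set.\<close>

definition num_segments :: "'a set set \<Rightarrow> nat" where
  "num_segments E = card {set p | p. is_segment E p}"

definition M2 :: "'a set set \<Rightarrow> nat" where
  "M2 E = (\<Sum>e\<in>E. \<Prod>v\<in>e. deg E v)"

definition CT :: "nat \<Rightarrow> nat \<Rightarrow> (nat set \<times> nat set set) set" where
  "CT n k = {(V, E). is_tree V E \<and> chemical V E \<and> card V = n \<and> num_segments E = k}"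

end

theory Submission
  imports Defs
begin

text \<open>
  Let w have degree 3 and its neighbour x degree 2, let y be the other neighbour of x, and let
  the pendent vertex u hang at the vertex v of degree 4. Smooth x away, replacing the path
  w x y by the edge w y (a tree has no triangles), and use x instead to subdivide the edge u v.
  Every degree is preserved, the result is again a tree, and its segments correspond to those
  of T, since a segment through a subdivided edge merely gains or loses the vertex x; so the new
  tree lies in CT n k as well. The edges w x, x y, u v of weights 6, 2 d(y), 4 are replaced by
  w y, u x, x v of weights 3 d(y), 2, 8, so M2 grows by d(y) > 0, contradicting maximality.
\<close>

section \<open>Simple graphs and trees\<close>

definition all_edges :: "'a set \<Rightarrow> 'a set set" where
  "all_edges V = {{u, v} | u v. u \<in> V \<and> v \<in> V \<and> u \<noteq> v}"

definition connected_on :: "'a set \<Rightarrow> 'a set set \<Rightarrow> bool" where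
  "connected_on V E \<longleftrightarrow> (\<forall>u\<in>V. \<forall>v\<in>V. (u, v) \<in> {(x, y). adj E x y}\<^sup>*)"

lemma is_tree_iff:
  "is_tree V E \<longleftrightarrow>
     finite V \<and> V \<noteq> {} \<and> E \<subseteq> all_edges V \<and> connected_on V E \<and> card E = card V - 1"
  unfolding is_tree_def all_edges_def connected_on_def ..

lemma adj_commute: "adj E u v \<longleftrightarrow> adj E v u"
  unfolding adj_def by (auto simp: insert_commute)

lemma all_edges_subset_Pow: "all_edges V \<subseteq> Pow V"
  unfolding all_edges_def by auto

lemma finite_edges: "finite V \<Longrightarrow> E \<subseteq> all_edges V \<Longrightarrow> finite E"
  using all_edges_subset_Pow by (meson finite_Pow_iff finite_subset subset_trans)

lemma edge_subset_vertices: "E \<subseteq> all_edges V \<Longrightarrow> e \<in> E \<Longrightarrow> e \<subseteq> V"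
  using all_edges_subset_Pow by blast

lemma edge_other_end: "E \<subseteq> all_edges V \<Longrightarrow> e \<in> E \<Longrightarrow> z \<in> e \<Longrightarrow> \<exists>y. y \<noteq> z \<and> e = {z, y}"
  unfolding all_edges_def by auto

lemma doubleton_in_all_edges: "u \<in> V \<Longrightarrow> v \<in> V \<Longrightarrow> u \<noteq> v \<Longrightarrow> {u, v} \<in> all_edges V"
  unfolding all_edges_def by blast

lemma all_edges_mono: "V \<subseteq> W \<Longrightarrow> all_edges V \<subseteq> all_edges W"
  unfolding all_edges_def by blast

lemma deg_pos: "finite E \<Longrightarrow> e \<in> E \<Longrightarrow> z \<in> e \<Longrightarrow> 0 < deg E z"
  unfolding deg_def by (auto simp: card_gt_0_iff)

lemma all_edges_Diff: "e \<in> all_edges V \<Longrightarrow> x \<notin> e \<Longrightarrow> e \<in> all_edges (V - {x})"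
  unfolding all_edges_def by blast

lemma deg_2_neighbour_cases:
  assumes "deg E c = 2" and "adj E c p" "adj E c q" "adj E c r" and "p \<noteq> q"
  shows "r = p \<or> r = q"
proof (rule ccontr)
  assume "\<not> (r = p \<or> r = q)"
  then have "{c, p} \<noteq> {c, q}" "{c, p} \<noteq> {c, r}" "{c, q} \<noteq> {c, r}"
    using assms(2-5) unfolding adj_def by (auto simp: doubleton_eq_iff)
  then have "card {{c, p}, {c, q}, {c, r}} = 3"
    by simp
  moreover have "finite {e \<in> E. c \<in> e}"
    using assms(1) unfolding deg_def by (metis card.infinite zero_neq_numeral)
  moreover have "{{c, p}, {c, q}, {c, r}} \<subseteq> {e \<in> E. c \<in> e}"
    using assms(2-4) unfolding adj_def by auto
  ultimately have "3 \<le> deg E c"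
    unfolding deg_def by (metis card_mono)
  with assms(1) show False by simp
qed

lemma deg_2_incident_edges:
  assumes "E \<subseteq> all_edges V" and "finite E" and "deg E x = 2" and "{w, x} \<in> E"
  obtains y where "y \<noteq> x" "y \<noteq> w" "{e \<in> E. x \<in> e} = {{w, x}, {x, y}}"
proof -
  let ?I = "{e \<in> E. x \<in> e}"
  have card_I: "card ?I = 2" using assms(3) unfolding deg_def .
  then obtain A B where "?I = {A, B}" "A \<noteq> B" by (meson card_2_iff)
  then obtain e where e: "e \<in> ?I" "e \<noteq> {w, x}" by (metis insertCI)
  then obtain y where y: "y \<noteq> x" "e = {x, y}" using edge_other_end[OF assms(1)] by blast
  have "y \<noteq> w" using e(2) y(2) by (auto simp: insert_commute)
  then have "card {{w, x}, {x, y}} = 2" using y(1) by (simp add: doubleton_eq_iff)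
  moreover have "{{w, x}, {x, y}} \<subseteq> ?I" using assms(4) e y(2) by simp
  moreover have "finite ?I" using assms(2) by simp
  ultimately have "{{w, x}, {x, y}} = ?I" using card_subset_eq card_I by metis
  with y(1) \<open>y \<noteq> w\<close> show ?thesis using that by simp
qed

lemma connected_on_image:
  assumes "connected_on V E" and "\<And>p q. adj E p q \<Longrightarrow> (h p, h q) \<in> {(x, y). adj E' x y}\<^sup>*"
  shows "connected_on (h ` V) E'"
proof -
  have "(h u, h v) \<in> {(x, y). adj E' x y}\<^sup>*" if "(u, v) \<in> {(x, y). adj E x y}\<^sup>*" for u v
    using that by (induction rule: rtrancl_induct) (auto intro: rtrancl_trans assms(2))
  then show ?thesis
    using assms(1) unfolding connected_on_def by blast
qed

lemma connected_on_insert: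
  assumes "connected_on V E" and "a \<in> V" and "adj E x a"
  shows "connected_on (insert x V) E"
proof -
  let ?R = "{(x, y). adj E x y}"
  have "(x, a) \<in> ?R\<^sup>*" "(a, x) \<in> ?R\<^sup>*"
    using assms(3) adj_commute[of E x a] by auto
  then have "(u, a) \<in> ?R\<^sup>*" "(a, u) \<in> ?R\<^sup>*" if "u \<in> insert x V" for u
    using that assms(1,2) unfolding connected_on_def by auto
  then show ?thesis
    unfolding connected_on_def by (meson rtrancl_trans)
qed

lemma connected_on_parent_map:
  assumes "connected_on V E" and "r \<in> V"
  obtains parent and rank :: "'a \<Rightarrow> nat"
  where "\<And>v. v \<in> V - {r} \<Longrightarrow> adj E v (parent v) \<and> rank (parent v) < rank v"
proof -
  let ?R = "{(x, y). adj E x y}"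
  define dist where "dist v = (LEAST n. (v, r) \<in> ?R ^^ n)" for v
  have dist: "(v, r) \<in> ?R ^^ dist v" if "v \<in> V" for v
  proof -
    have "(v, r) \<in> ?R\<^sup>*" using assms that unfolding connected_on_def by blast
    then obtain n where "(v, r) \<in> ?R ^^ n" using rtrancl_power by blast
    then show ?thesis unfolding dist_def by (rule LeastI)
  qed
  have "\<exists>p. adj E v p \<and> dist p < dist v" if "v \<in> V - {r}" for v
  proof -
    have d: "(v, r) \<in> ?R ^^ dist v" using dist that by blast
    have "dist v \<noteq> 0"
    proof
      assume "dist v = 0"
      with d that show False by simp
    qed
    then obtain m where m: "dist v = Suc m" using not0_implies_Suc by blast
    with d obtain p where "(v, p) \<in> ?R" and "(p, r) \<in> ?R ^^ m"
      using relpow_Suc_D2 by fastforce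
    moreover from this(2) have "dist p \<le> m" unfolding dist_def by (rule Least_le)
    ultimately show ?thesis using m by auto
  qed
  then show ?thesis using that by metis
qed

lemma card_vertices_le_Suc_card_edges:
  assumes "finite V" and "V \<noteq> {}" and "E \<subseteq> all_edges V" and "connected_on V E"
  shows "card V \<le> Suc (card E)"
proof -
  obtain r where r: "r \<in> V" using assms(2) by blast
  obtain parent and rank :: "'a \<Rightarrow> nat"
    where parent: "\<And>v. v \<in> V - {r} \<Longrightarrow> adj E v (parent v) \<and> rank (parent v) < rank v"
    using connected_on_parent_map[OF assms(4) r] by blast
  \<comment> \<open>Every vertex other than the root owns the edge to its parent.\<close>
  have "inj_on (\<lambda>v. {v, parent v}) (V - {r})"
  proof (rule inj_onI)
    fix v w assume v: "v \<in> V - {r}" and w: "w \<in> V - {r}" and eq: "{v, parent v} = {w, parent w}"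
    show "v = w"
    proof (rule ccontr)
      assume "v \<noteq> w"
      with eq have "parent w = v" "parent v = w"
        unfolding doubleton_eq_iff by blast+
      with parent[OF v] parent[OF w] have "rank w < rank v" "rank v < rank w"
        by simp_all
      then show False by simp
    qed
  qed
  moreover have "(\<lambda>v. {v, parent v}) ` (V - {r}) \<subseteq> E"
    using parent unfolding adj_def by blast
  ultimately have "card (V - {r}) \<le> card E"
    by (rule card_inj_on_le[OF _ _ finite_edges[OF assms(1,3)]])
  then show ?thesis using r assms(1) by (simp add: card_Diff_singleton)
qed

lemma tree_no_triangle:
  assumes "is_tree V E" and "{w, x} \<in> E" "{x, y} \<in> E" "{w, y} \<in> E"
    and "w \<noteq> x" "x \<noteq> y" "w \<noteq> y"
  shows False
proof -
  let ?E = "E - {{w, y}}"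
  let ?R = "{(p, q). adj ?E p q}"
  have T: "finite V" "V \<noteq> {}" "E \<subseteq> all_edges V" "connected_on V E" "card E = card V - 1"
    using assms(1) unfolding is_tree_iff by auto
  have "{w, x} \<noteq> {w, y}" "{x, y} \<noteq> {w, y}"
    using assms(5-7) by (auto simp: doubleton_eq_iff)
  then have "adj ?E w x" "adj ?E x y"
    using assms(2,3,5,6) unfolding adj_def by auto
  then have "(w, x) \<in> ?R" "(x, w) \<in> ?R" "(x, y) \<in> ?R" "(y, x) \<in> ?R"
    using adj_commute[of ?E] by simp_all
  then have wy: "(w, y) \<in> ?R\<^sup>*" "(y, w) \<in> ?R\<^sup>*"
    by (meson converse_rtrancl_into_rtrancl r_into_rtrancl)+
  have "(p, q) \<in> ?R\<^sup>*" if "adj E p q" for p q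
  proof (cases "{p, q} = {w, y}")
    case True
    then have "(p, q) = (w, y) \<or> (p, q) = (y, w)"
      unfolding doubleton_eq_iff by blast
    then show ?thesis using wy by blast
  next
    case False
    with that have "adj ?E p q" unfolding adj_def by blast
    then show ?thesis by blast
  qed
  then have "connected_on (id ` V) ?E"
    by (intro connected_on_image[OF T(4)]) simp
  then have "card V \<le> Suc (card ?E)"
    using T(3) by (intro card_vertices_le_Suc_card_edges[OF T(1,2)]) auto
  moreover have "card ?E = card E - 1" "card E \<noteq> 0"
    using assms(4) finite_edges[OF T(1,3)] by auto
  ultimately show False using T(5) by linarith
qed

section \<open>Segments as lists\<close>

lemma is_segment_iff:
  "is_segment E p \<longleftrightarrow> 2 \<le> length p \<and> distinct p \<and> successively (adj E) p \<and>
     (\<forall>v\<in>set p. deg E v = 2 \<longleftrightarrow> v \<noteq> hd p \<and> v \<noteq> last p)"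
proof -
  have ends: "(deg E (hd p) \<noteq> 2 \<and> deg E (last p) \<noteq> 2 \<and>
      (\<forall>i. 0 < i \<and> i < length p - 1 \<longrightarrow> deg E (p ! i) = 2)) \<longleftrightarrow>
    (\<forall>v\<in>set p. deg E v = 2 \<longleftrightarrow> v \<noteq> hd p \<and> v \<noteq> last p)"
    (is "?ends \<longleftrightarrow> ?inner") if p: "distinct p" "2 \<le> length p"
  proof -
    have "p \<noteq> []" using p(2) by auto
    then have hd: "hd p = p ! 0" and last: "last p = p ! (length p - 1)"
      by (simp_all add: hd_conv_nth last_conv_nth)
    have idx: "p ! i = hd p \<longleftrightarrow> i = 0" "p ! i = last p \<longleftrightarrow> i = length p - 1"
      if "i < length p" for i
      unfolding hd last using \<open>p \<noteq> []\<close> nth_eq_iff_index_eq[OF p(1) that, of 0]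
        nth_eq_iff_index_eq[OF p(1) that, of "length p - 1"] by simp_all
    show ?thesis
    proof
      assume "?ends"
      show "?inner"
      proof
        fix v assume "v \<in> set p"
        then obtain i where i: "i < length p" "v = p ! i" by (metis in_set_conv_nth)
        show "deg E v = 2 \<longleftrightarrow> v \<noteq> hd p \<and> v \<noteq> last p"
          using \<open>?ends\<close> idx[OF i(1)] i by (cases "0 < i \<and> i < length p - 1") auto
      qed
    next
      assume "?inner"
      have "hd p \<in> set p" "last p \<in> set p" using \<open>p \<noteq> []\<close> by simp_all
      moreover have "p ! i \<in> set p" "p ! i \<noteq> hd p" "p ! i \<noteq> last p"
        if "0 < i" "i < length p - 1" for i
        using idx[of i] that by auto
      ultimately show "?ends" using \<open>?inner\<close> by auto
    qed
  qed
  have "(\<forall>i < length p - 1. adj E (p ! i) (p ! Suc i)) \<longleftrightarrow> successively (adj E) p"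
    unfolding successively_conv_nth by (auto simp: less_diff_conv)
  then show ?thesis
    unfolding is_segment_def using ends by blast
qed

lemma successively_append_Cons_Cons:
  "successively P (xs @ u # v # ys) \<longleftrightarrow>
     successively P (xs @ [u]) \<and> P u v \<and> successively P (v # ys)"
  using successively_append_iff[of P "xs @ [u]" "v # ys"] by auto

lemma segment_vertex_has_neighbour:
  assumes "is_segment E p" and "v \<in> set p"
  shows "\<exists>w. adj E v w"
proof -
  obtain xs ys where p: "p = xs @ v # ys" using assms(2) split_list by metis
  have succ: "successively (adj E) p" and len: "2 \<le> length p"
    using assms(1) unfolding is_segment_iff by auto
  show ?thesis
  proof (cases ys)
    case (Cons w ys')
    then have "adj E v w"
      using succ unfolding p Cons successively_append_Cons_Cons by blast
    then show ?thesis ..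
  next
    case Nil
    with len p have "xs \<noteq> []" by auto
    then have "p = butlast xs @ last xs # v # []" using p Nil by simp
    then have "adj E (last xs) v"
      using succ successively_append_Cons_Cons by metis
    then show ?thesis using adj_commute by metis
  qed
qed

lemma interior_vertex_split:
  assumes "v \<in> set p" and "v \<noteq> hd p" and "v \<noteq> last p"
  shows "\<exists>xs u w ys. p = xs @ u # v # w # ys"
proof -
  obtain xs ys where p: "p = xs @ v # ys" using assms(1) split_list by metis
  then have "xs \<noteq> []" "ys \<noteq> []" using assms(2,3) by auto
  then have "p = butlast xs @ last xs # v # hd ys # tl ys" using p by simp
  then show ?thesis by blast
qed

definition uses_edge :: "'a list \<Rightarrow> 'a set \<Rightarrow> bool" where
  "uses_edge p e \<longleftrightarrow> (\<exists>xs u v ys. p = xs @ u # v # ys \<and> {u, v} = e)"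

lemma uses_edge_nth:
  assumes "Suc i < length p"
  shows "uses_edge p {p ! i, p ! Suc i}"
proof -
  have "p = take i p @ p ! i # p ! Suc i # drop (Suc (Suc i)) p"
    using assms by (simp add: Cons_nth_drop_Suc)
  then show ?thesis unfolding uses_edge_def by blast
qed

lemma successively_if_not_uses_edge:
  "successively P p \<Longrightarrow> \<not> uses_edge p e \<Longrightarrow> successively (\<lambda>u v. P u v \<and> {u, v} \<noteq> e) p"
  using uses_edge_nth unfolding successively_conv_nth by blast

lemma is_segment_transfer:
  assumes "is_segment E p" and "successively (adj E') p" and "\<forall>v\<in>set p. deg E' v = deg E v"
  shows "is_segment E' p"
  using assms unfolding is_segment_iff by simp

lemma segment_uses_edge_if_deg_2:
  assumes seg: "is_segment E p" and "adj E a b" and "a \<in> set p" and "deg E a = 2"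
  shows "uses_edge p {a, b}"
proof -
  have "a \<noteq> hd p" "a \<noteq> last p"
    using assms(1,3,4) unfolding is_segment_iff by auto
  then obtain xs u w ys where p: "p = xs @ u # a # w # ys"
    using interior_vertex_split assms(3) by metis
  have "successively (adj E) p" "distinct p"
    using seg unfolding is_segment_iff by auto
  then have "adj E u a" "adj E a w" "u \<noteq> w"
    unfolding p successively_append_Cons_Cons by auto
  then have "adj E a u" "adj E a w" "u \<noteq> w"
    using adj_commute by metis+
  then have "b = u \<or> b = w"
    using deg_2_neighbour_cases assms(2,4) by metis
  then show ?thesis
  proof
    assume "b = u"
    then show ?thesis unfolding uses_edge_def p by (auto simp: insert_commute)
  next
    assume "b = w"
    then have "p = (xs @ [u]) @ a # b # ys" using p by simp
    then show ?thesis unfolding uses_edge_def by blast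
  qed
qed

lemma segment_uses_edgeD:
  assumes seg: "is_segment E p" and "uses_edge p {a, b}"
  shows "a \<in> set p \<and> b \<in> set p \<and> (deg E a = 2 \<or> deg E b = 2 \<or> card (set p) = 2)"
proof -
  obtain xs u v ys where p: "p = xs @ u # v # ys" and uv: "{u, v} = {a, b}"
    using assms(2) unfolding uses_edge_def by blast
  have dist: "distinct p" and inner: "\<forall>z\<in>set p. deg E z = 2 \<longleftrightarrow> z \<noteq> hd p \<and> z \<noteq> last p"
    using seg unfolding is_segment_iff by auto
  have "deg E u = 2" if "xs \<noteq> []"
    using inner dist that unfolding p by (cases xs) (auto simp: last_append)
  moreover have "deg E v = 2" if "ys \<noteq> []"
    using inner dist that unfolding p by (cases xs) (auto simp: last_append)
  moreover have "card (set p) = 2" if "xs = []" "ys = []"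
    using dist that unfolding p by simp
  ultimately have "deg E a = 2 \<or> deg E b = 2 \<or> card (set p) = 2"
    using uv by (metis doubleton_eq_iff)
  moreover have "a \<in> set p" "b \<in> set p"
    using uv unfolding p by (auto simp: doubleton_eq_iff)
  ultimately show ?thesis by blast
qed

lemma segment_uses_edgeI:
  assumes seg: "is_segment E p" and ab: "adj E a b"
    and in_p: "a \<in> set p" "b \<in> set p" "deg E a = 2 \<or> deg E b = 2 \<or> card (set p) = 2"
  shows "uses_edge p {a, b}"
proof -
  have ba: "adj E b a" using ab adj_commute by metis
  consider "deg E a = 2" | "deg E b = 2" | "card (set p) = 2" using in_p by blast
  then show ?thesis
  proof cases
    case 1
    then show ?thesis using segment_uses_edge_if_deg_2[OF seg ab] in_p by blast
  next
    case 2
    then show ?thesis using segment_uses_edge_if_deg_2[OF seg ba] in_p by (simp add: insert_commute)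
  next
    case 3
    have "a \<noteq> b" using ab unfolding adj_def by blast
    have "length p = 2"
      using 3 distinct_card seg unfolding is_segment_iff by metis
    then obtain u v where "p = [] @ u # v # []"
      by (metis append_Nil length_0_conv length_Suc_conv numeral_2_eq_2)
    moreover with in_p \<open>a \<noteq> b\<close> have "{u, v} = {a, b}" by auto
    ultimately show ?thesis unfolding uses_edge_def by blast
  qed
qed

lemma segment_uses_edge_iff:
  assumes "is_segment E p" and "adj E a b"
  shows "uses_edge p {a, b} \<longleftrightarrow>
    a \<in> set p \<and> b \<in> set p \<and> (deg E a = 2 \<or> deg E b = 2 \<or> card (set p) = 2)"
proof
  assume "uses_edge p {a, b}"
  then show "a \<in> set p \<and> b \<in> set p \<and> (deg E a = 2 \<or> deg E b = 2 \<or> card (set p) = 2)"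
    by (rule segment_uses_edgeD[OF assms(1)])
next
  assume "a \<in> set p \<and> b \<in> set p \<and> (deg E a = 2 \<or> deg E b = 2 \<or> card (set p) = 2)"
  then show "uses_edge p {a, b}"
    using segment_uses_edgeI[OF assms] by (elim conjE)
qed

section \<open>Subdividing an edge\<close>

definition subdiv :: "'a set set \<Rightarrow> 'a \<Rightarrow> 'a \<Rightarrow> 'a \<Rightarrow> 'a set set" where
  "subdiv E a b x = insert {a, x} (insert {x, b} (E - {{a, b}}))"

lemma deg_insert_edge:
  assumes "finite E" and "e \<notin> E"
  shows "deg (insert e E) z = (if z \<in> e then Suc (deg E z) else deg E z)"
proof -
  have "{e' \<in> insert e E. z \<in> e'} = (if z \<in> e then insert e {e' \<in> E. z \<in> e'} else {e' \<in> E. z \<in> e'})"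
    by auto
  then show ?thesis unfolding deg_def using assms by simp
qed

lemma deg_remove_edge:
  assumes "finite E" and "e \<in> E"
  shows "deg (E - {e}) z = (if z \<in> e then deg E z - 1 else deg E z)"
proof -
  have "{e' \<in> E - {e}. z \<in> e'} = {e' \<in> E. z \<in> e'} - {e}"
    by auto
  then show ?thesis unfolding deg_def using assms by auto
qed

locale edge_subdivision =
  fixes E :: "'a set set" and a b x :: 'a
  assumes finite_E: "finite E" and edge_ab: "{a, b} \<in> E" and a_neq_b: "a \<noteq> b"
    and fresh: "\<forall>e\<in>E. x \<notin> e"
begin

abbreviation E' :: "'a set set" where
  "E' \<equiv> subdiv E a b x"

lemma a_neq_x: "a \<noteq> x" and b_neq_x: "b \<noteq> x"
  using fresh edge_ab by auto

lemma new_edges_notin: "{a, x} \<notin> E" "{x, b} \<notin> E"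
  using fresh by auto

lemma new_edges_distinct: "{a, x} \<noteq> {x, b}"
  using a_neq_b a_neq_x b_neq_x by (simp add: doubleton_eq_iff)

lemma adj_subdiv_iff:
  "adj E' p q \<longleftrightarrow> (adj E p q \<and> {p, q} \<noteq> {a, b}) \<or> {p, q} = {a, x} \<or> {p, q} = {x, b}"
  unfolding adj_def subdiv_def using a_neq_x b_neq_x by (auto simp: doubleton_eq_iff)

lemma adj_fresh: "adj E p q \<Longrightarrow> p \<noteq> x"
  unfolding adj_def using fresh by auto

lemma adj_subdiv_old: "p \<noteq> x \<Longrightarrow> q \<noteq> x \<Longrightarrow> adj E' p q \<longleftrightarrow> adj E p q \<and> {p, q} \<noteq> {a, b}"
  unfolding adj_subdiv_iff by (auto simp: doubleton_eq_iff)

lemma adj_subdiv_new: "adj E' x q \<Longrightarrow> q = a \<or> q = b"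
  unfolding adj_subdiv_iff using adj_fresh by (auto simp: doubleton_eq_iff)

lemma adj_subdiv_new_edges: "adj E' a x" "adj E' x a" "adj E' x b" "adj E' b x"
  unfolding adj_subdiv_iff by (simp_all add: insert_commute)

lemma deg_subdiv:
  "deg E' z = (if z = x then 2 else deg E z)"
proof -
  have "z \<in> {a, b} \<Longrightarrow> deg E z \<noteq> 0"
    using deg_pos[OF finite_E edge_ab] by blast
  moreover have "deg E x = 0"
    using fresh unfolding deg_def by (simp add: card_eq_0_iff)
  moreover have "{a, x} \<notin> insert {x, b} (E - {{a, b}})" "{x, b} \<notin> E - {{a, b}}"
    using new_edges_distinct new_edges_notin by auto
  ultimately show ?thesis
    unfolding subdiv_def using finite_E edge_ab a_neq_b a_neq_x b_neq_x
    by (auto simp: deg_insert_edge deg_remove_edge)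
qed

lemma deg_subdiv_new: "deg E' x = 2"
  by (simp add: deg_subdiv)

lemma deg_subdiv_old: "z \<noteq> x \<Longrightarrow> deg E' z = deg E z"
  by (simp add: deg_subdiv)

lemma card_subdiv: "card E' = Suc (card E)"
proof -
  have "card E' = Suc (Suc (card (E - {{a, b}})))"
    unfolding subdiv_def using new_edges_distinct new_edges_notin finite_E by simp
  then show ?thesis
    using card_Suc_Diff1[OF finite_E edge_ab] by simp
qed

lemma sum_subdiv: "sum f E' + f {a, b} = sum f E + f {a, x} + f {x, b}"
proof -
  have "sum f E' = f {a, x} + f {x, b} + sum f (E - {{a, b}})"
    unfolding subdiv_def using new_edges_distinct new_edges_notin finite_E by (simp add: add.assoc)
  moreover have "sum f E = f {a, b} + sum f (E - {{a, b}})"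
    using sum.remove[OF finite_E edge_ab] .
  ultimately show ?thesis by (simp add: ac_simps)
qed

lemma successively_subdiv_old:
  "successively (adj E') ps \<Longrightarrow> x \<notin> set ps \<Longrightarrow> successively (adj E) ps"
  by (erule successively_mono) (metis adj_subdiv_old)

lemma successively_subdiv_new:
  assumes "successively (adj E) ps" and "\<not> {a, b} \<subseteq> set ps"
  shows "successively (adj E') ps"
  using assms(1)
proof (rule successively_mono)
  fix u v assume "u \<in> set ps" "v \<in> set ps" "adj E u v"
  moreover from this have "u \<noteq> x" "v \<noteq> x"
    using adj_fresh adj_commute by metis+
  moreover have "{u, v} \<noteq> {a, b}"
    using calculation(1,2) assms(2) by (metis empty_subsetI insert_subset)
  ultimately show "adj E' u v" using adj_subdiv_old by blast
qed

lemma segment_not_fresh: "is_segment E p \<Longrightarrow> x \<notin> set p"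
  using segment_vertex_has_neighbour adj_fresh by metis

lemma segment_subdiv_avoiding_new:
  assumes seg: "is_segment E' p" and x: "x \<notin> set p"
  shows "is_segment E p" and "\<not> uses_edge p {a, b}"
proof -
  have succ: "successively (adj E') p" using seg unfolding is_segment_iff by blast
  then show "is_segment E p"
    using is_segment_transfer[OF seg] successively_subdiv_old x deg_subdiv_old by metis
  show "\<not> uses_edge p {a, b}"
  proof
    assume "uses_edge p {a, b}"
    then obtain xs u v ys where p: "p = xs @ u # v # ys" and uv: "{u, v} = {a, b}"
      unfolding uses_edge_def by blast
    have "adj E' u v" using succ unfolding p successively_append_Cons_Cons by blast
    moreover have "u \<noteq> x" "v \<noteq> x" using x unfolding p by auto
    ultimately show False using uv adj_subdiv_old by metis
  qed
qed

lemma segment_subdiv_if_not_uses_edge: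
  assumes seg: "is_segment E p" and "\<not> uses_edge p {a, b}"
  shows "is_segment E' p"
proof -
  have x: "x \<notin> set p" using segment_not_fresh[OF seg] .
  have "successively (adj E) p" using seg unfolding is_segment_iff by blast
  then have "successively (\<lambda>u v. adj E u v \<and> {u, v} \<noteq> {a, b}) p"
    using successively_if_not_uses_edge assms(2) by blast
  then have "successively (adj E') p"
    by (rule successively_mono) (use x adj_subdiv_old in metis)
  then show ?thesis
    using is_segment_transfer[OF seg] deg_subdiv_old x by metis
qed

lemma segment_subdiv_contract:
  assumes seg: "is_segment E' p" and x: "x \<in> set p"
  shows "\<exists>q. is_segment E q \<and> uses_edge q {a, b} \<and> set q = set p - {x}"
proof -
  have dist: "distinct p" and succ: "successively (adj E') p"
    and inner: "\<forall>v\<in>set p. deg E' v = 2 \<longleftrightarrow> v \<noteq> hd p \<and> v \<noteq> last p"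
    using seg unfolding is_segment_iff by auto
  have "x \<noteq> hd p" "x \<noteq> last p" using inner x deg_subdiv_new by auto
  then obtain xs c d ys where p: "p = xs @ c # x # d # ys"
    using interior_vertex_split x by metis
  have succ_p: "successively (adj E') (xs @ [c])" "adj E' c x" "adj E' x d"
      "successively (adj E') (d # ys)"
    using succ unfolding p successively_append_Cons_Cons by simp_all
  have "c = a \<or> c = b" "d = a \<or> d = b"
    using succ_p(2,3) adj_subdiv_new adj_commute by metis+
  moreover have "c \<noteq> d" using dist unfolding p by auto
  ultimately have cd: "{c, d} = {a, b}" by auto
  define q where "q = xs @ c # d # ys"
  have set_q: "set q = set p - {x}" and dist_q: "distinct q"
    using dist unfolding p q_def by auto
  have ends: "hd q = hd p" "last q = last p"
    unfolding p q_def by (cases xs; simp)+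
  have "adj E c d" using cd edge_ab a_neq_b unfolding adj_def by auto
  moreover have "x \<notin> set (xs @ [c])" "x \<notin> set (d # ys)" using dist unfolding p by auto
  ultimately have "successively (adj E) q"
    unfolding q_def successively_append_Cons_Cons
    using succ_p(1,4) successively_subdiv_old by blast
  moreover have "\<forall>v\<in>set q. deg E v = 2 \<longleftrightarrow> v \<noteq> hd q \<and> v \<noteq> last q"
    using inner deg_subdiv_old unfolding set_q ends by auto
  ultimately have "is_segment E q"
    unfolding is_segment_iff q_def using dist_q q_def by simp
  moreover have "uses_edge q {a, b}" unfolding uses_edge_def q_def using cd by blast
  ultimately show ?thesis using set_q by blast
qed

lemma segment_subdiv_expand:
  assumes seg: "is_segment E p" and "uses_edge p {a, b}"
  shows "\<exists>q. is_segment E' q \<and> set q = insert x (set p)"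
proof -
  obtain xs c d ys where p: "p = xs @ c # d # ys" and cd: "{c, d} = {a, b}"
    using assms(2) unfolding uses_edge_def by blast
  have dist: "distinct p" and succ: "successively (adj E) p" and "p \<noteq> []"
    and inner: "\<forall>v\<in>set p. deg E v = 2 \<longleftrightarrow> v \<noteq> hd p \<and> v \<noteq> last p"
    using seg unfolding is_segment_iff by auto
  have x: "x \<notin> set p" using segment_not_fresh[OF seg] .
  define q where "q = xs @ c # x # d # ys"
  have set_q: "set q = insert x (set p)" and dist_q: "distinct q"
    using dist x unfolding p q_def by auto
  have ends: "hd q = hd p" "last q = last p"
    unfolding p q_def by (cases xs; simp)+
  have "successively (adj E) (xs @ [c])" "successively (adj E) (d # ys)"
    using succ unfolding p successively_append_Cons_Cons by simp_all
  moreover have "\<not> {a, b} \<subseteq> set (xs @ [c])" "\<not> {a, b} \<subseteq> set (d # ys)"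
    using dist cd unfolding p by (auto simp: doubleton_eq_iff)
  ultimately have "successively (adj E') (xs @ [c])" "successively (adj E') (d # ys)"
    using successively_subdiv_new by blast+
  moreover have "c = a \<and> d = b \<or> c = b \<and> d = a"
    using cd by (simp add: doubleton_eq_iff)
  then have "adj E' c x" "adj E' x d"
    using adj_subdiv_new_edges by auto
  ultimately have "successively (adj E') q"
    unfolding q_def successively_append_Cons_Cons by simp
  moreover have "hd p \<in> set p" "last p \<in> set p" using \<open>p \<noteq> []\<close> by simp_all
  then have "\<forall>v\<in>set q. deg E' v = 2 \<longleftrightarrow> v \<noteq> hd q \<and> v \<noteq> last q"
    using inner x deg_subdiv unfolding set_q ends by auto
  ultimately have "is_segment E' q"
    unfolding is_segment_iff using dist_q q_def by simp
  then show ?thesis using set_q by blast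
qed

lemma segment_subdiv_new_vertex_shared:
  assumes p: "is_segment E' p" "x \<in> set p" and r: "is_segment E' r"
    and eq: "set p - {x} = set r - {x}"
  shows "x \<in> set r"
proof (rule ccontr)
  assume "x \<notin> set r"
  obtain q where q: "is_segment E q" "uses_edge q {a, b}" "set q = set p - {x}"
    using segment_subdiv_contract p by blast
  have "is_segment E r" "\<not> uses_edge r {a, b}"
    using segment_subdiv_avoiding_new r \<open>x \<notin> set r\<close> by blast+
  \<comment> \<open>Whether a segment uses an edge is determined by its vertex set.\<close>
  moreover have "adj E a b" using edge_ab a_neq_b unfolding adj_def by simp
  moreover have "set q = set r" using q(3) eq \<open>x \<notin> set r\<close> by simp
  ultimately have "uses_edge q {a, b} \<longleftrightarrow> uses_edge r {a, b}"
    using segment_uses_edge_iff[OF q(1)] segment_uses_edge_iff[OF \<open>is_segment E r\<close>] by simp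
  with q(2) \<open>\<not> uses_edge r {a, b}\<close> show False by blast
qed

lemma inj_on_segment_sets_subdiv:
  "inj_on (\<lambda>s. s - {x}) {set p | p. is_segment E' p}"
proof (rule inj_onI)
  fix s t assume "s \<in> {set p | p. is_segment E' p}" "t \<in> {set p | p. is_segment E' p}"
    and st: "s - {x} = t - {x}"
  then obtain p r where p: "s = set p" "is_segment E' p" and r: "t = set r" "is_segment E' r"
    by blast
  have "x \<in> set p \<longleftrightarrow> x \<in> set r"
    using segment_subdiv_new_vertex_shared p(2) r(2) st unfolding p(1) r(1) by metis
  then show "s = t" using st p(1) r(1) by blast
qed

lemma image_segment_sets_subdiv:
  "(\<lambda>s. s - {x}) ` {set p | p. is_segment E' p} = {set p | p. is_segment E p}"
proof (intro equalityI subsetI)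
  fix s assume "s \<in> (\<lambda>s. s - {x}) ` {set p | p. is_segment E' p}"
  then obtain p where p: "s = set p - {x}" "is_segment E' p" by blast
  show "s \<in> {set p | p. is_segment E p}"
  proof (cases "x \<in> set p")
    case True
    then obtain q where "is_segment E q" "set q = set p - {x}"
      using segment_subdiv_contract p(2) by blast
    then show ?thesis using p(1) by blast
  next
    case False
    then have "is_segment E p" "s = set p"
      using segment_subdiv_avoiding_new p by blast+
    then show ?thesis by blast
  qed
next
  fix s assume "s \<in> {set p | p. is_segment E p}"
  then obtain p where p: "s = set p" "is_segment E p" by blast
  have x: "x \<notin> set p" using segment_not_fresh p(2) by blast
  show "s \<in> (\<lambda>s. s - {x}) ` {set p | p. is_segment E' p}"
  proof (cases "uses_edge p {a, b}")
    case True
    then obtain q where q: "is_segment E' q" "set q = insert x (set p)"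
      using segment_subdiv_expand p(2) by blast
    then have "s = (\<lambda>s. s - {x}) (set q)" using p(1) x by simp
    moreover have "set q \<in> {set p | p. is_segment E' p}" using q(1) by blast
    ultimately show ?thesis by blast
  next
    case False
    then have "is_segment E' p" using segment_subdiv_if_not_uses_edge p(2) by blast
    moreover have "s = (\<lambda>s. s - {x}) (set p)" using p(1) x by simp
    ultimately show ?thesis by blast
  qed
qed

lemma num_segments_subdiv: "num_segments E' = num_segments E"
  unfolding num_segments_def
  using card_image[OF inj_on_segment_sets_subdiv] image_segment_sets_subdiv by simp

lemma connected_on_subdiv:
  assumes conn: "connected_on V E" and "a \<in> V"
  shows "connected_on (insert x V) E'"
proof -
  let ?R' = "{(u, v). adj E' u v}"
  have "(a, x) \<in> ?R'" "(x, b) \<in> ?R'" "(b, x) \<in> ?R'" "(x, a) \<in> ?R'"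
    using adj_subdiv_new_edges by simp_all
  then have ab: "(a, b) \<in> ?R'\<^sup>*" "(b, a) \<in> ?R'\<^sup>*"
    by (meson converse_rtrancl_into_rtrancl r_into_rtrancl)+
  have "(p, q) \<in> ?R'\<^sup>*" if "adj E p q" for p q
  proof (cases "{p, q} = {a, b}")
    case True
    then have "(p, q) = (a, b) \<or> (p, q) = (b, a)" unfolding doubleton_eq_iff by blast
    then show ?thesis using ab by blast
  next
    case False
    with that have "adj E' p q" by (simp add: adj_subdiv_iff)
    then show ?thesis by blast
  qed
  then have "connected_on (id ` V) E'"
    by (intro connected_on_image[OF conn]) simp
  then show ?thesis
    using connected_on_insert assms(2) adj_subdiv_new_edges(2) by simp
qed

lemma connected_on_subdiv_collapse:
  assumes conn: "connected_on (insert x V) E'" and "x \<notin> V" and "a \<in> V"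
  shows "connected_on V E"
proof -
  let ?R = "{(u, v). adj E u v}"
  have ab: "(a, b) \<in> ?R" "(b, a) \<in> ?R"
    using edge_ab a_neq_b unfolding adj_def by (simp_all add: insert_commute)
  define h where "h v = (if v = x then a else v)" for v
  \<comment> \<open>Collapsing the subdivision vertex onto a turns walks in E' into walks in E.\<close>
  have "(h p, h q) \<in> ?R\<^sup>*" if "adj E' p q" for p q
  proof -
    have "(adj E p q \<and> {p, q} \<noteq> {a, b}) \<or> {p, q} = {a, x} \<or> {p, q} = {x, b}"
      using that by (simp only: adj_subdiv_iff)
    then consider "adj E p q" | "{p, q} = {a, x}" | "{p, q} = {x, b}"
      by argo
    then show ?thesis
    proof cases
      case 1
      moreover have "p \<noteq> x" "q \<noteq> x" using 1 adj_fresh adj_commute by metis+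
      ultimately show ?thesis unfolding h_def by (simp add: r_into_rtrancl)
    next
      case 2
      then have "h p = a" "h q = a" unfolding h_def by (auto simp: doubleton_eq_iff)
      then show ?thesis by simp
    next
      case 3
      then have "(h p, h q) = (a, b) \<or> (h p, h q) = (b, a)"
        unfolding h_def using b_neq_x by (auto simp: doubleton_eq_iff)
      then show ?thesis using ab by (auto intro: r_into_rtrancl)
    qed
  qed
  then have "connected_on (h ` insert x V) E"
    by (rule connected_on_image[OF conn])
  moreover have "h ` insert x V = V"
    using assms(2,3) unfolding h_def by auto
  ultimately show ?thesis by simp
qed

lemma is_tree_subdiv_iff:
  assumes "x \<notin> V" and "E \<subseteq> all_edges V"
  shows "is_tree (insert x V) E' \<longleftrightarrow> is_tree V E"
proof -
  have "a \<in> V" "b \<in> V" using edge_subset_vertices[OF assms(2) edge_ab] by auto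
  have "{a, x} \<in> all_edges (insert x V)" "{x, b} \<in> all_edges (insert x V)"
    using \<open>a \<in> V\<close> \<open>b \<in> V\<close> a_neq_x b_neq_x by (simp_all add: doubleton_in_all_edges)
  moreover have "E - {{a, b}} \<subseteq> all_edges (insert x V)"
    using assms(2) all_edges_mono[of V "insert x V"] by (meson Diff_subset order_trans subset_insertI)
  ultimately have "E' \<subseteq> all_edges (insert x V)"
    unfolding subdiv_def by simp
  moreover have "card E' = card (insert x V) - 1 \<longleftrightarrow> card E = card V - 1" if "finite V"
  proof -
    have "0 < card V" using that \<open>a \<in> V\<close> card_gt_0_iff by blast
    then show ?thesis using card_subdiv assms(1) that by auto
  qed
  moreover have "connected_on (insert x V) E' \<longleftrightarrow> connected_on V E"
    using connected_on_subdiv connected_on_subdiv_collapse assms(1) \<open>a \<in> V\<close> by blast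
  ultimately show ?thesis
    unfolding is_tree_iff using assms(2) \<open>a \<in> V\<close> by auto
qed

end

section \<open>Moving a vertex of degree 2\<close>

definition smooth :: "'a set set \<Rightarrow> 'a \<Rightarrow> 'a \<Rightarrow> 'a \<Rightarrow> 'a set set" where
  "smooth E w x y = insert {w, y} (E - {{w, x}, {x, y}})"

lemma smooth_subdivision:
  assumes "finite E" and inc: "{e \<in> E. x \<in> e} = {{w, x}, {x, y}}"
    and "w \<noteq> x" "y \<noteq> x" "w \<noteq> y" and "{w, y} \<notin> E"
  shows "edge_subdivision (smooth E w x y) w y x" and "subdiv (smooth E w x y) w y x = E"
proof -
  show "edge_subdivision (smooth E w x y) w y x"
    using assms unfolding smooth_def by unfold_locales auto
  have "smooth E w x y - {{w, y}} = E - {{w, x}, {x, y}}"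
    using assms(6) unfolding smooth_def by auto
  moreover have "{w, x} \<in> E" "{x, y} \<in> E" using inc by auto
  ultimately show "subdiv (smooth E w x y) w y x = E"
    unfolding subdiv_def by auto
qed

lemma smooth_tree:
  assumes tree: "is_tree V E" and inc: "{e \<in> E. x \<in> e} = {{w, x}, {x, y}}"
    and "w \<noteq> x" "y \<noteq> x" "w \<noteq> y"
  shows "edge_subdivision (smooth E w x y) w y x" and "subdiv (smooth E w x y) w y x = E"
    and "is_tree (V - {x}) (smooth E w x y)"
proof -
  have V: "finite V" "E \<subseteq> all_edges V" using tree unfolding is_tree_iff by auto
  have finite_E: "finite E" using finite_edges V by blast
  have "{w, x} \<in> {e \<in> E. x \<in> e}" "{x, y} \<in> {e \<in> E. x \<in> e}" unfolding inc by simp_all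
  then have wx: "{w, x} \<in> E" and xy: "{x, y} \<in> E" by simp_all
  have "{w, y} \<notin> E" using tree_no_triangle[OF tree wx xy] assms(3-5) by blast
  show sub: "edge_subdivision (smooth E w x y) w y x"
    and E_eq: "subdiv (smooth E w x y) w y x = E"
    using smooth_subdivision[OF finite_E inc assms(3-5) \<open>{w, y} \<notin> E\<close>] by auto
  interpret smoothed: edge_subdivision "smooth E w x y" w y x by (rule sub)
  have "w \<in> V" "y \<in> V" "x \<in> V" using edge_subset_vertices[OF V(2)] wx xy by auto
  have "smooth E w x y \<subseteq> all_edges V"
    using V(2) doubleton_in_all_edges[OF \<open>w \<in> V\<close> \<open>y \<in> V\<close> assms(5)]
    unfolding smooth_def by (meson Diff_subset insert_subset order_trans)
  then have "smooth E w x y \<subseteq> all_edges (V - {x})"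
    using smoothed.fresh all_edges_Diff by (meson subset_iff)
  moreover have "insert x (V - {x}) = V" using insert_Diff \<open>x \<in> V\<close> .
  ultimately show "is_tree (V - {x}) (smooth E w x y)"
    using smoothed.is_tree_subdiv_iff[of "V - {x}"] tree unfolding E_eq by simp
qed

lemma relocate_subdivision_vertex:
  assumes tree: "is_tree V E" and inc: "{e \<in> E. x \<in> e} = {{w, x}, {x, y}}"
    and "w \<noteq> x" "y \<noteq> x" "w \<noteq> y"
    and uv: "{u, v} \<in> E" "u \<noteq> v" "u \<noteq> x" "v \<noteq> x"
  defines "E' \<equiv> subdiv (smooth E w x y) u v x"
  shows "is_tree V E'" and "deg E' = deg E" and "num_segments E' = num_segments E"
    and "M2 E' + deg E u * deg E v + 2 * deg E w + 2 * deg E y =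
         M2 E + deg E w * deg E y + 2 * deg E u + 2 * deg E v"
proof -
  define E\<^sub>0 where "E\<^sub>0 = smooth E w x y"
  note smooth = smooth_tree[OF tree inc assms(3-5), folded E\<^sub>0_def]
  interpret smoothed: edge_subdivision E\<^sub>0 w y x by (rule smooth(1))
  have "{u, v} \<noteq> {w, x}" "{u, v} \<noteq> {x, y}"
    using uv(3,4) by (auto simp: doubleton_eq_iff)
  then have "{u, v} \<in> E\<^sub>0" unfolding E\<^sub>0_def smooth_def using uv(1) by simp
  interpret moved: edge_subdivision E\<^sub>0 u v x
    using smoothed.finite_E \<open>{u, v} \<in> E\<^sub>0\<close> uv(2) smoothed.fresh by unfold_locales
  have E'_eq: "E' = subdiv E\<^sub>0 u v x" unfolding E'_def E\<^sub>0_def ..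
  have "{w, x} \<in> {e \<in> E. x \<in> e}" unfolding inc by simp
  then have "x \<in> V" using tree edge_subset_vertices unfolding is_tree_iff by blast
  then show "is_tree V E'"
    using moved.is_tree_subdiv_iff[of "V - {x}"] smooth(3) unfolding E'_eq is_tree_iff
    by (simp add: insert_absorb)
  have "deg (subdiv E\<^sub>0 u v x) z = deg (subdiv E\<^sub>0 w y x) z" for z
    by (simp add: moved.deg_subdiv smoothed.deg_subdiv)
  then show deg: "deg E' = deg E"
    unfolding E'_eq smooth(2)[symmetric] ..
  show "num_segments E' = num_segments E"
    using moved.num_segments_subdiv smoothed.num_segments_subdiv
    unfolding E'_eq smooth(2)[symmetric] by simp
  define P where "P e = (\<Prod>z\<in>e. deg E z)" for e
  have "deg E x = 2" using smoothed.deg_subdiv_new unfolding smooth(2) .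
  then have P: "P {u, v} = deg E u * deg E v" "P {w, y} = deg E w * deg E y"
      "P {u, x} = 2 * deg E u" "P {x, v} = 2 * deg E v"
      "P {w, x} = 2 * deg E w" "P {x, y} = 2 * deg E y"
    unfolding P_def using assms(3-5) uv(2-4) by simp_all
  have "M2 E' = sum P E'" unfolding M2_def P_def deg ..
  moreover have "M2 E = sum P E" unfolding M2_def P_def ..
  moreover have "sum P E' + P {u, v} = sum P E\<^sub>0 + P {u, x} + P {x, v}"
    using moved.sum_subdiv unfolding E'_eq .
  moreover have "sum P E + P {w, y} = sum P E\<^sub>0 + P {w, x} + P {x, y}"
    using smoothed.sum_subdiv unfolding smooth(2) .
  ultimately show "M2 E' + deg E u * deg E v + 2 * deg E w + 2 * deg E y =
      M2 E + deg E w * deg E y + 2 * deg E u + 2 * deg E v"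
    unfolding P by linarith
qed

theorem lemma5:
  fixes n k :: nat and V :: "nat set" and E :: "nat set set"
  assumes "3 \<le> k" and "k \<le> n - 1"
    and "(V, E) \<in> CT n k"
    and "\<forall>(V', E') \<in> CT n k. M2 E' \<le> M2 E"
    and "\<exists>u v. adj E u v \<and> deg E u = 1 \<and> deg E v = 4"
  shows "\<not> (\<exists>u v. adj E u v \<and> deg E u = 3 \<and> deg E v = 2)"
proof
  assume "\<exists>u v. adj E u v \<and> deg E u = 3 \<and> deg E v = 2"
  then obtain w x where wx: "adj E w x" and dw: "deg E w = 3" and dx: "deg E x = 2" by blast
  obtain u v where uv: "adj E u v" and du: "deg E u = 1" and dv: "deg E v = 4"
    using assms(5) by blast
  have T: "is_tree V E" "chemical V E" "card V = n" "num_segments E = k"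
    using assms(3) unfolding CT_def by auto
  have E: "E \<subseteq> all_edges V" "finite E" using T(1) finite_edges unfolding is_tree_iff by auto
  obtain y where y: "y \<noteq> x" "y \<noteq> w" and inc: "{e \<in> E. x \<in> e} = {{w, x}, {x, y}}"
    using deg_2_incident_edges[OF E dx] wx unfolding adj_def by metis
  define E' where "E' = subdiv (smooth E w x y) u v x"
  have "w \<noteq> x" "u \<noteq> x" "v \<noteq> x" "{u, v} \<in> E" "u \<noteq> v"
    using dw dx du dv uv unfolding adj_def by auto
  note relocated = relocate_subdivision_vertex[OF T(1) inc \<open>w \<noteq> x\<close> y(1) y(2)[symmetric]
      \<open>{u, v} \<in> E\<close> \<open>u \<noteq> v\<close> \<open>u \<noteq> x\<close> \<open>v \<noteq> x\<close>, folded E'_def]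
  have "(V, E') \<in> CT n k"
    using relocated(1-3) T unfolding CT_def chemical_def by simp
  then have "M2 E' \<le> M2 E" using assms(4) by blast
  moreover have "0 < deg E y" using deg_pos[OF E(2)] inc by blast
  ultimately show False using relocated(4) du dv dw by simp
qed

end
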